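(* Let $\nu \geq 0$, $\alpha > -1$ and $c > 0$. For integers $k \geq 0$ define the moments $$\mu_k = \int_0^{\infty} x^{k+\alpha} e^{-cx}\,[J_{\nu}(x)+1]\, dx, \qquad \mu_{k,0} = \int_0^{\infty} x^{k+\alpha} e^{-cx} J_{\nu}(x)\, dx .$$ Then for all $k \geq 1$, $$\mu_{k+1} = \frac{1}{c^2+1}\left\{ c\,[2(k+\alpha)+1]\,\mu_k - [(k+\alpha)^2-\nu^2]\,\mu_{k-1} + \frac{\Gamma(k+\alpha)\,[(k+\alpha)^2+(k+\alpha)-c^2\nu^2]}{c^{k+\alpha+2}} \right\},$$ with $$\mu_0 = \mu_{0,0} + \frac{\Gamma(\alpha+1)}{c^{\alpha+1}}, \qquad \mu_1 = \mu_{1,0} + \frac{\Gamma(\alpha+2)}{c^{\alpha+2}}.$$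
   Context: $J_\nu$ is the Bessel function of the first kind of order $\nu$ and $\Gamma$ the Gamma function. *)

theory Defs
  imports "HOL-Analysis.Analysis"
begin

definition BesselJ :: "real \<Rightarrow> real \<Rightarrow> real" where
  "BesselJ \<nu> x = (\<Sum>m. (-1) ^ m / (fact m * Gamma (real m + \<nu> + 1)) * (x / 2) ^ (2 * m) * (x / 2) powr \<nu>)"

end

theory Submission
  imports Defs "HOL-Real_Asymp.Real_Asymp"
begin

(*
  Write J_nu(x) = (x/2)^nu g(x), where g is the even entire function with coefficients
  (-1)^m / (m! Gamma(m + nu + 1)) in powers of x^2/4; it solves x g'' + (2 nu + 1) g' + x g = 0.
  For nu >= -1/2 the energy g^2 + g'^2 is nonincreasing on [0, oo), so g is bounded and every
  moment M(s) = int_0^oo x^s exp(-c x) J_nu(x) dx with s + nu > -1 converges. The function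
  exp(-c x) x^(t + nu) (x g' + (c x - t + nu) g) vanishes at 0 and at oo, and by the differential
  equation its derivative is a combination of three moments of g; integrating it gives
  (c^2 + 1) M(t + 1) = c (2t + 1) M(t) - (t^2 - nu^2) M(t - 1).
  The summand 1 contributes the moments Gamma(t + 1) / c^(t + 1), which satisfy the same
  recurrence up to the explicit inhomogeneous term.
*)

definition bessel_coeff :: "real \<Rightarrow> nat \<Rightarrow> real" where
  "bessel_coeff \<nu> m = (-1) ^ m / (fact m * Gamma (real m + \<nu> + 1))"

lemma bessel_coeff_Suc:
  assumes "\<nu> > -1"
  shows "bessel_coeff \<nu> (Suc n) = - bessel_coeff \<nu> n / ((real n + 1) * (real n + \<nu> + 1))"
proof -
  have pos: "real n + \<nu> + 1 > 0" using assms by simp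
  then have "real n + \<nu> + 1 \<notin> \<int>\<^sub>\<le>\<^sub>0"
    by (auto dest: nonpos_Ints_nonpos)
  then have "Gamma (real (Suc n) + \<nu> + 1) = (real n + \<nu> + 1) * Gamma (real n + \<nu> + 1)"
    using Gamma_plus1[of "real n + \<nu> + 1"] by (simp add: add_ac)
  then show ?thesis
    using pos by (simp add: bessel_coeff_def fact_Suc field_simps)
qed

lemma summable_bessel_coeff:
  assumes "\<nu> > -1"
  shows "summable (\<lambda>n. bessel_coeff \<nu> n * z ^ n)"
proof (rule summable_ratio_test[of "1/2" "Suc (nat \<lceil>2 * \<bar>z\<bar>\<rceil>)"])
  fix n assume n: "n \<ge> Suc (nat \<lceil>2 * \<bar>z\<bar>\<rceil>)"
  define d where "d = (real n + 1) * (real n + \<nu> + 1)"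
  have "real n + \<nu> + 1 \<ge> 1"
    using n assms by linarith
  then have "d \<ge> real n + 1"
    unfolding d_def by (simp add: mult_le_cancel_left1)
  moreover have "real n \<ge> 2 * \<bar>z\<bar>"
    using n by linarith
  ultimately have d: "d \<ge> 2 * \<bar>z\<bar>" "d > 0"
    by linarith+
  have "norm (bessel_coeff \<nu> (Suc n) * z ^ Suc n) = norm (bessel_coeff \<nu> n * z ^ n) * (\<bar>z\<bar> / d)"
    using d by (simp add: bessel_coeff_Suc[OF assms] d_def abs_mult power_abs field_simps)
  also have "\<dots> \<le> norm (bessel_coeff \<nu> n * z ^ n) * (1 / 2)"
    using d by (intro mult_left_mono) (auto simp: field_simps)
  finally show "norm (bessel_coeff \<nu> (Suc n) * z ^ Suc n) \<le> 1 / 2 * norm (bessel_coeff \<nu> n * z ^ n)"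
    by simp
qed simp

definition bessel_series :: "nat \<Rightarrow> real \<Rightarrow> real \<Rightarrow> real" where
  "bessel_series j \<nu> z = (\<Sum>n. (diffs ^^ j) (bessel_coeff \<nu>) n * z ^ n)"

lemma summable_bessel_series:
  assumes "\<nu> > -1"
  shows "summable (\<lambda>n. (diffs ^^ j) (bessel_coeff \<nu>) n * z ^ n)"
proof (induction j arbitrary: z)
  case 0
  show ?case using summable_bessel_coeff[OF assms] by simp
next
  case (Suc j)
  show ?case using termdiff_converges_all[OF Suc.IH] by simp
qed

lemma bessel_series_has_field_derivative:
  assumes "\<nu> > -1"
  shows "(bessel_series j \<nu> has_field_derivative bessel_series (Suc j) \<nu> z) (at z)"
  unfolding bessel_series_def[abs_def]
  using termdiffs_strong_converges_everywhere[OF summable_bessel_series[OF assms]] by simp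

lemma isCont_bessel_series: "\<nu> > -1 \<Longrightarrow> isCont (bessel_series j \<nu>) z"
  using bessel_series_has_field_derivative DERIV_isCont by blast

lemma bessel_series_ode:
  assumes "\<nu> > -1"
  shows "z * bessel_series 2 \<nu> z + (\<nu> + 1) * bessel_series 1 \<nu> z + bessel_series 0 \<nu> z = 0"
proof -
  define a where "a = bessel_coeff \<nu>"
  have sums: "(\<lambda>n. (diffs ^^ j) a n * z ^ n) sums bessel_series j \<nu> z" for j
    unfolding a_def bessel_series_def by (rule summable_sums[OF summable_bessel_series[OF assms]])
  have "(\<lambda>n. real (Suc n) * diffs a (Suc n) * z ^ Suc n) sums (z * bessel_series 2 \<nu> z)"
    using sums_mult[OF sums[of 2], of z]
    by (simp add: numeral_2_eq_2 diffs_def algebra_simps)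
  then have "(\<lambda>n. real n * diffs a n * z ^ n) sums (z * bessel_series 2 \<nu> z)"
    by (subst (asm) sums_Suc_iff) simp
  then have "(\<lambda>n. real n * diffs a n * z ^ n + (\<nu> + 1) * (diffs a n * z ^ n) + a n * z ^ n) sums
      (z * bessel_series 2 \<nu> z + (\<nu> + 1) * bessel_series 1 \<nu> z + bessel_series 0 \<nu> z)"
    using sums[of 1] sums[of 0] by (intro sums_add sums_mult) simp_all
  moreover have "real n * diffs a n * z ^ n + (\<nu> + 1) * (diffs a n * z ^ n) + a n * z ^ n = 0" for n
  proof -
    have "real n + \<nu> + 1 > 0" using assms by simp
    then have "a (Suc n) * ((real n + 1) * (real n + \<nu> + 1)) = - a n"
      by (simp add: a_def bessel_coeff_Suc[OF assms])
    moreover have "real n * diffs a n * z ^ n + (\<nu> + 1) * (diffs a n * z ^ n) + a n * z ^ n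
        = (a (Suc n) * ((real n + 1) * (real n + \<nu> + 1)) + a n) * z ^ n"
      by (simp add: diffs_def algebra_simps)
    ultimately show ?thesis by simp
  qed
  ultimately show ?thesis
    using sums_unique2[OF _ sums_zero] by simp
qed

definition bessel_reduced :: "real \<Rightarrow> real \<Rightarrow> real" where
  "bessel_reduced \<nu> x = bessel_series 0 \<nu> (x\<^sup>2 / 4)"

definition bessel_reduced_deriv :: "real \<Rightarrow> real \<Rightarrow> real" where
  "bessel_reduced_deriv \<nu> x = x / 2 * bessel_series 1 \<nu> (x\<^sup>2 / 4)"

lemma BesselJ_eq_bessel_reduced:
  assumes "\<nu> > -1"
  shows "BesselJ \<nu> x = (x / 2) powr \<nu> * bessel_reduced \<nu> x"
proof -
  have "BesselJ \<nu> x = (\<Sum>m. bessel_coeff \<nu> m * (x\<^sup>2 / 4) ^ m * (x / 2) powr \<nu>)"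
    unfolding BesselJ_def bessel_coeff_def by (simp add: power_mult power_divide)
  also have "\<dots> = (\<Sum>m. bessel_coeff \<nu> m * (x\<^sup>2 / 4) ^ m) * (x / 2) powr \<nu>"
    by (rule suminf_mult2[symmetric]) (rule summable_bessel_coeff[OF assms])
  finally show ?thesis
    by (simp add: bessel_reduced_def bessel_series_def)
qed

lemma bessel_series_square_has_real_derivative:
  assumes "\<nu> > -1"
  shows "((\<lambda>x. bessel_series j \<nu> (x\<^sup>2 / 4)) has_real_derivative
           bessel_series (Suc j) \<nu> (x\<^sup>2 / 4) * (x / 2)) (at x)"
proof (rule DERIV_chain2[OF bessel_series_has_field_derivative[OF assms]])
  show "((\<lambda>x. x\<^sup>2 / 4) has_real_derivative x / 2) (at x)"
    by (auto intro!: derivative_eq_intros)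
qed

lemma bessel_reduced_has_real_derivative:
  assumes "\<nu> > -1"
  shows "(bessel_reduced \<nu> has_real_derivative bessel_reduced_deriv \<nu> x) (at x)"
  using bessel_series_square_has_real_derivative[OF assms, of 0 x]
  by (simp add: bessel_reduced_def[abs_def] bessel_reduced_deriv_def mult.commute)

lemma bessel_reduced_deriv_has_real_derivative:
  assumes "\<nu> > -1" and "x \<noteq> 0"
  shows "(bessel_reduced_deriv \<nu> has_real_derivative
           - (2 * \<nu> + 1) * bessel_reduced_deriv \<nu> x / x - bessel_reduced \<nu> x) (at x)"
proof -
  define z where "z = x\<^sup>2 / 4"
  have "(bessel_reduced_deriv \<nu> has_real_derivative
      1 / 2 * bessel_series 1 \<nu> z + bessel_series 2 \<nu> z * (x / 2) * (x / 2)) (at x)"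
    unfolding bessel_reduced_deriv_def[abs_def] z_def
    by (rule DERIV_mult[OF _ bessel_series_square_has_real_derivative[OF assms(1), of 1,
          unfolded Suc_1]]) (auto intro!: derivative_eq_intros)
  moreover have "1 / 2 * bessel_series 1 \<nu> z + bessel_series 2 \<nu> z * (x / 2) * (x / 2)
      = - (2 * \<nu> + 1) * bessel_reduced_deriv \<nu> x / x - bessel_reduced \<nu> x"
  proof -
    have "bessel_series 2 \<nu> z * (x / 2) * (x / 2) = z * bessel_series 2 \<nu> z"
      by (simp add: z_def power2_eq_square)
    also have "\<dots> = - (\<nu> + 1) * bessel_series 1 \<nu> z - bessel_series 0 \<nu> z"
      using bessel_series_ode[OF assms(1), of z] by (simp add: algebra_simps)
    finally have ode: "bessel_series 2 \<nu> z * (x / 2) * (x / 2)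
        = - (\<nu> + 1) * bessel_series 1 \<nu> z - bessel_series 0 \<nu> z" .
    show ?thesis
      unfolding bessel_reduced_def bessel_reduced_deriv_def z_def[symmetric] ode
      using assms(2) by (simp add: field_simps)
  qed
  ultimately show ?thesis by simp
qed

lemma isCont_bessel_reduced: "\<nu> > -1 \<Longrightarrow> isCont (bessel_reduced \<nu>) x"
  using bessel_reduced_has_real_derivative DERIV_isCont by blast

lemma isCont_bessel_reduced_deriv: "\<nu> > -1 \<Longrightarrow> isCont (bessel_reduced_deriv \<nu>) x"
  unfolding bessel_reduced_deriv_def[abs_def]
  by (intro continuous_intros isCont_o2[OF _ isCont_bessel_series]) simp_all

lemma bessel_reduced_energy_le:
  assumes "\<nu> \<ge> -1/2" and "x \<ge> 0"
  shows "(bessel_reduced \<nu> x)\<^sup>2 + (bessel_reduced_deriv \<nu> x)\<^sup>2 \<le> (bessel_reduced \<nu> 0)\<^sup>2"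
proof -
  define E where "E y = (bessel_reduced \<nu> y)\<^sup>2 + (bessel_reduced_deriv \<nu> y)\<^sup>2" for y
  have \<nu>: "\<nu> > -1" using assms(1) by simp
  have "E x \<le> E 0"
  proof (rule DERIV_nonpos_imp_decreasing_open[OF assms(2)])
    fix y :: real assume y: "0 < y" "y < x"
    let ?g = "bessel_reduced \<nu> y" and ?g' = "bessel_reduced_deriv \<nu> y"
    have "(E has_real_derivative 2 * ?g * ?g' + 2 * ?g' * (- (2 * \<nu> + 1) * ?g' / y - ?g)) (at y)"
      unfolding E_def[abs_def] using y
      by (auto intro!: derivative_eq_intros bessel_reduced_has_real_derivative[OF \<nu>]
          bessel_reduced_deriv_has_real_derivative[OF \<nu>])
    moreover have "2 * ?g * ?g' + 2 * ?g' * (- (2 * \<nu> + 1) * ?g' / y - ?g) = - 2 * (2 * \<nu> + 1) * ?g'\<^sup>2 / y"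
      by (simp add: power2_eq_square algebra_simps)
    moreover have "- 2 * (2 * \<nu> + 1) * ?g'\<^sup>2 / y \<le> 0"
      using y assms(1) by (intro divide_nonpos_pos mult_nonpos_nonneg) auto
    ultimately show "\<exists>d. (E has_real_derivative d) (at y) \<and> d \<le> 0" by metis
  next
    show "continuous_on {0..x} E"
      unfolding E_def using \<nu>
      by (intro continuous_at_imp_continuous_on ballI continuous_intros
          isCont_bessel_reduced isCont_bessel_reduced_deriv)
  qed
  then show ?thesis
    by (simp add: E_def bessel_reduced_deriv_def)
qed

lemma abs_bessel_reduced_le:
  assumes "\<nu> \<ge> -1/2" and "x \<ge> 0"
  shows "\<bar>bessel_reduced \<nu> x\<bar> \<le> \<bar>bessel_reduced \<nu> 0\<bar>"
    and "\<bar>bessel_reduced_deriv \<nu> x\<bar> \<le> \<bar>bessel_reduced \<nu> 0\<bar>"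
  using bessel_reduced_energy_le[OF assms]
  by (auto simp: abs_le_square_iff intro: order_trans[rotated])

lemma has_bochner_integral_powr_exp:
  fixes s c :: real
  assumes "s > 0" and "c > 0"
  shows "has_bochner_integral lborel (\<lambda>x. indicator {0<..} x *\<^sub>R (x powr (s - 1) * exp (- c * x)))
           (Gamma s / c powr s)"
proof -
  define f where "f t = indicator {0..} t * t powr (s - 1) / exp t" for t :: real
  have "has_bochner_integral lborel f (Gamma s)"
  proof (rule has_bochner_integral_nn_integral)
    show "f \<in> borel_measurable lborel"
      unfolding f_def by measurable
    show "(\<integral>\<^sup>+ x. ennreal (f x) \<partial>lborel) = ennreal (Gamma s)"
      using Gamma_conv_nn_integral_real[OF assms(1)] by (simp add: f_def)
  qed (use assms in \<open>auto simp: f_def indicator_def\<close>)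
  then have "has_bochner_integral lborel (\<lambda>x. f (c * x)) (Gamma s / c)"
    using lborel_has_bochner_integral_real_affine_iff[of c f "Gamma s" 0] assms(2)
    by (simp add: field_simps)
  then have "has_bochner_integral lborel (\<lambda>x. c powr (1 - s) * f (c * x)) (c powr (1 - s) * (Gamma s / c))"
    by (rule has_bochner_integral_mult_right)
  moreover have "c powr (1 - s) * f (c * x) = indicator {0<..} x *\<^sub>R (x powr (s - 1) * exp (- c * x))" for x
  proof (cases "x > 0")
    case True
    have "c powr (1 - s) * c powr (s - 1) = 1"
      using assms by (simp flip: powr_add)
    with True assms show ?thesis
      by (simp add: f_def powr_mult exp_minus field_simps)
  qed (use assms in \<open>auto simp: f_def indicator_def zero_le_mult_iff\<close>)
  moreover have "c powr (1 - s) * (Gamma s / c) = Gamma s / c powr s"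
    using assms by (simp add: powr_diff field_simps)
  ultimately show ?thesis by simp
qed

lemma set_integrable_powr_exp:
  fixes q c :: real
  assumes "q > -1" and "c > 0"
  shows "set_integrable lborel {0<..} (\<lambda>x. x powr q * exp (- c * x))"
  using has_bochner_integral_powr_exp[of "q + 1" c] assms
  by (auto simp: set_integrable_def has_bochner_integral_iff)

lemma set_integral_powr_exp:
  fixes q c :: real
  assumes "q > -1" and "c > 0"
  shows "(LINT x:{0<..}|lborel. x powr q * exp (- c * x)) = Gamma (q + 1) / c powr (q + 1)"
  using has_bochner_integral_powr_exp[of "q + 1" c] assms
  by (auto simp: set_lebesgue_integral_def has_bochner_integral_iff)

lemma set_integrable_powr_exp_mult_bounded:
  fixes q c B :: real and f :: "real \<Rightarrow> real"
  assumes "q > -1" and "c > 0" and [measurable]: "f \<in> borel_measurable borel"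
    and bound: "\<And>x. x > 0 \<Longrightarrow> \<bar>f x\<bar> \<le> B"
  shows "set_integrable lborel {0<..} (\<lambda>x. x powr q * exp (- c * x) * f x)"
proof (rule set_integrable_bound)
  show "set_integrable lborel {0<..} (\<lambda>x. B * (x powr q * exp (- c * x)))"
    using set_integrable_powr_exp[OF assms(1,2)] by simp
  show "set_borel_measurable lborel {0<..} (\<lambda>x. x powr q * exp (- c * x) * f x)"
    unfolding set_borel_measurable_def by measurable
  show "AE x in lborel. x \<in> {0<..} \<longrightarrow>
      norm (x powr q * exp (- c * x) * f x) \<le> norm (B * (x powr q * exp (- c * x)))"
    using bound by (force simp: abs_mult mult.commute intro!: mult_left_mono AE_I2)
qed

lemma set_integral_deriv_eq_zero_Ioi:
  fixes F f :: "real \<Rightarrow> real"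
  assumes "\<And>x. x > 0 \<Longrightarrow> (F has_real_derivative f x) (at x)"
    and "\<And>x. x > 0 \<Longrightarrow> isCont f x"
    and "set_integrable lborel {0<..} f"
    and "(F \<longlongrightarrow> 0) (at_right 0)" and "(F \<longlongrightarrow> 0) at_top"
  shows "(LINT x:{0<..}|lborel. f x) = 0"
proof -
  have "(LBINT x=ereal 0..\<infinity>. f x) = 0 - 0"
    by (rule interval_integral_FTC_integrable)
      (use assms in \<open>auto simp: has_real_derivative_iff_has_vector_derivative ereal_tendsto_simps\<close>)
  then show ?thesis
    by (simp add: interval_lebesgue_integral_def)
qed

lemma borel_measurable_bessel_reduced [measurable]:
  "\<nu> > -1 \<Longrightarrow> bessel_reduced \<nu> \<in> borel_measurable borel"
  by (intro borel_measurable_continuous_onI continuous_at_imp_continuous_on ballI isCont_bessel_reduced)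

lemma set_integrable_powr_exp_bessel_reduced:
  fixes \<nu> c q :: real
  assumes "\<nu> \<ge> -1/2" and "c > 0" and "q > -1"
  shows "set_integrable lborel {0<..} (\<lambda>x. x powr q * exp (- c * x) * bessel_reduced \<nu> x)"
  using assms abs_bessel_reduced_le(1)[OF assms(1)]
  by (intro set_integrable_powr_exp_mult_bounded[of _ _ _ "\<bar>bessel_reduced \<nu> 0\<bar>"]) auto

(* The second factor is chosen so that, by the differential equation, the terms with
   bessel_reduced_deriv cancel in the derivative. *)

definition bessel_moment_primitive :: "real \<Rightarrow> real \<Rightarrow> real \<Rightarrow> real \<Rightarrow> real" where
  "bessel_moment_primitive \<nu> c t x = exp (- c * x) * x powr (t + \<nu>) *
     (x * bessel_reduced_deriv \<nu> x + (c * x - t + \<nu>) * bessel_reduced \<nu> x)"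

lemma bessel_moment_primitive_has_real_derivative:
  fixes \<nu> c t x :: real
  assumes "\<nu> > -1" and "x > 0"
  shows "(bessel_moment_primitive \<nu> c t has_real_derivative
           c * (2 * t + 1) * (x powr (t + \<nu>) * exp (- c * x) * bessel_reduced \<nu> x)
           - (c\<^sup>2 + 1) * (x powr (t + \<nu> + 1) * exp (- c * x) * bessel_reduced \<nu> x)
           - (t\<^sup>2 - \<nu>\<^sup>2) * (x powr (t + \<nu> - 1) * exp (- c * x) * bessel_reduced \<nu> x)) (at x)"
proof -
  let ?g = "bessel_reduced \<nu> x" and ?g' = "bessel_reduced_deriv \<nu> x"
  define K where "K x = x * bessel_reduced_deriv \<nu> x + (c * x - t + \<nu>) * bessel_reduced \<nu> x" for x
  define P where "P = x powr (t + \<nu> - 1)"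
  have P: "x powr (t + \<nu>) = P * x" "x powr (t + \<nu> + 1) = P * x * x"
    using assms(2) by (simp_all add: P_def powr_diff powr_add)
  have "(K has_real_derivative
      ?g' + x * (- (2 * \<nu> + 1) * ?g' / x - ?g) + c * ?g + (c * x - t + \<nu>) * ?g') (at x)"
    unfolding K_def[abs_def] using assms
    by (auto intro!: derivative_eq_intros bessel_reduced_has_real_derivative
        bessel_reduced_deriv_has_real_derivative simp: algebra_simps)
  moreover have "?g' + x * (- (2 * \<nu> + 1) * ?g' / x - ?g) + c * ?g + (c * x - t + \<nu>) * ?g'
      = (c * x - t - \<nu>) * ?g' + (c - x) * ?g"
    using assms(2) by (simp add: field_simps)
  ultimately have dK: "(K has_real_derivative (c * x - t - \<nu>) * ?g' + (c - x) * ?g) (at x)"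
    by simp
  have "(bessel_moment_primitive \<nu> c t has_real_derivative
      - c * exp (- c * x) * x powr (t + \<nu>) * K x + exp (- c * x) * ((t + \<nu>) * P) * K x
      + exp (- c * x) * x powr (t + \<nu>) * ((c * x - t - \<nu>) * ?g' + (c - x) * ?g)) (at x)"
    unfolding bessel_moment_primitive_def[abs_def] K_def[symmetric] using assms(2)
    by (auto intro!: derivative_eq_intros dK simp: P_def algebra_simps)
  moreover have "- c * exp (- c * x) * x powr (t + \<nu>) * K x + exp (- c * x) * ((t + \<nu>) * P) * K x
      + exp (- c * x) * x powr (t + \<nu>) * ((c * x - t - \<nu>) * ?g' + (c - x) * ?g)
    = c * (2 * t + 1) * (x powr (t + \<nu>) * exp (- c * x) * ?g)
      - (c\<^sup>2 + 1) * (x powr (t + \<nu> + 1) * exp (- c * x) * ?g)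
      - (t\<^sup>2 - \<nu>\<^sup>2) * (x powr (t + \<nu> - 1) * exp (- c * x) * ?g)"
    unfolding P P_def[symmetric] K_def by (simp add: algebra_simps power2_eq_square)
  ultimately show ?thesis by simp
qed

lemma tendsto_exp_powr_mult_linearly_bounded:
  fixes a c A B :: real and K :: "real \<Rightarrow> real"
  assumes "a > 0" and "c > 0" and "isCont K 0" and bound: "\<And>x. x \<ge> 0 \<Longrightarrow> \<bar>K x\<bar> \<le> A * x + B"
  shows "((\<lambda>x. exp (- c * x) * x powr a * K x) \<longlongrightarrow> 0) (at_right 0)"
    and "((\<lambda>x. exp (- c * x) * x powr a * K x) \<longlongrightarrow> 0) at_top"
proof -
  have "((\<lambda>x. x powr a) \<longlongrightarrow> 0) (at_right 0)"
    using assms(1) by real_asymp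
  moreover have "(K \<longlongrightarrow> K 0) (at_right 0)"
    using assms(3) by (simp add: isCont_def filterlim_at_split)
  ultimately have "((\<lambda>x. exp (- c * x) * x powr a * K x) \<longlongrightarrow> exp (- c * 0) * 0 * K 0) (at_right 0)"
    by (intro tendsto_intros)
  then show "((\<lambda>x. exp (- c * x) * x powr a * K x) \<longlongrightarrow> 0) (at_right 0)"
    by simp
  show "((\<lambda>x. exp (- c * x) * x powr a * K x) \<longlongrightarrow> 0) at_top"
  proof (rule Lim_null_comparison)
    show "\<forall>\<^sub>F x in at_top. norm (exp (- c * x) * x powr a * K x) \<le> exp (- c * x) * x powr a * (A * x + B)"
      using bound by (intro eventually_at_top_linorderI[of 0]) (simp add: abs_mult mult_left_mono)
    show "((\<lambda>x. exp (- c * x) * x powr a * (A * x + B)) \<longlongrightarrow> 0) at_top"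
      using assms(2) by real_asymp
  qed
qed

lemma bessel_moment_primitive_tendsto_zero:
  fixes \<nu> c t :: real
  assumes "\<nu> \<ge> -1/2" and "c > 0" and "t + \<nu> > 0"
  shows "(bessel_moment_primitive \<nu> c t \<longlongrightarrow> 0) (at_right 0)"
    and "(bessel_moment_primitive \<nu> c t \<longlongrightarrow> 0) at_top"
proof -
  define K where "K x = x * bessel_reduced_deriv \<nu> x + (c * x - t + \<nu>) * bessel_reduced \<nu> x" for x
  define M where "M = \<bar>bessel_reduced \<nu> 0\<bar>"
  have "isCont K 0"
    unfolding K_def[abs_def] using assms(1)
    by (intro continuous_intros isCont_bessel_reduced isCont_bessel_reduced_deriv) simp_all
  moreover have "\<bar>K x\<bar> \<le> M * (1 + c) * x + M * \<bar>t - \<nu>\<bar>" if "x \<ge> 0" for x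
  proof -
    have "c * x \<ge> 0" using that assms(2) by simp
    then have "\<bar>c * x - t + \<nu>\<bar> \<le> c * x + \<bar>t - \<nu>\<bar>"
      by linarith
    then have "\<bar>K x\<bar> \<le> x * \<bar>bessel_reduced_deriv \<nu> x\<bar> + (c * x + \<bar>t - \<nu>\<bar>) * \<bar>bessel_reduced \<nu> x\<bar>"
      unfolding K_def using that
      by (intro order_trans[OF abs_triangle_ineq] add_mono) (auto simp: abs_mult intro!: mult_right_mono)
    also have "\<dots> \<le> x * M + (c * x + \<bar>t - \<nu>\<bar>) * M"
      using that assms(2) abs_bessel_reduced_le[OF assms(1) that]
      by (intro add_mono mult_left_mono) (auto simp: M_def)
    finally show ?thesis by (simp add: algebra_simps)
  qed
  ultimately show "(bessel_moment_primitive \<nu> c t \<longlongrightarrow> 0) (at_right 0)"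
    and "(bessel_moment_primitive \<nu> c t \<longlongrightarrow> 0) at_top"
    unfolding bessel_moment_primitive_def[abs_def] K_def[symmetric]
    using tendsto_exp_powr_mult_linearly_bounded[OF assms(3,2)] by blast+
qed

lemma bessel_reduced_moment_recurrence:
  fixes \<nu> c t :: real
  assumes \<nu>: "\<nu> \<ge> -1/2" and c: "c > 0" and t: "t + \<nu> > 0"
  defines "I \<equiv> \<lambda>s. LINT x:{0<..}|lborel. x powr s * exp (- c * x) * bessel_reduced \<nu> x"
  shows "(c\<^sup>2 + 1) * I (t + \<nu> + 1) = c * (2 * t + 1) * I (t + \<nu>) - (t\<^sup>2 - \<nu>\<^sup>2) * I (t + \<nu> - 1)"
proof -
  define f where "f s x = x powr s * exp (- c * x) * bessel_reduced \<nu> x" for s x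
  define h where "h x = c * (2 * t + 1) * f (t + \<nu>) x - (c\<^sup>2 + 1) * f (t + \<nu> + 1) x
    - (t\<^sup>2 - \<nu>\<^sup>2) * f (t + \<nu> - 1) x" for x
  have "set_integrable lborel {0<..} (f s)" if "s > -1" for s
    unfolding f_def[abs_def] using \<nu> c that by (rule set_integrable_powr_exp_bessel_reduced)
  then have f_int: "set_integrable lborel {0<..} (f (t + \<nu>))"
      "set_integrable lborel {0<..} (f (t + \<nu> + 1))" "set_integrable lborel {0<..} (f (t + \<nu> - 1))"
    using t by auto
  have "(LINT x:{0<..}|lborel. h x) = 0"
  proof (rule set_integral_deriv_eq_zero_Ioi[of "bessel_moment_primitive \<nu> c t"])
    show "(bessel_moment_primitive \<nu> c t has_real_derivative h x) (at x)" if "x > 0" for x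
      using bessel_moment_primitive_has_real_derivative[OF _ that, of \<nu> c t] \<nu>
      unfolding h_def f_def by simp
    show "isCont h x" if "x > 0" for x
      unfolding h_def f_def using that \<nu>
      by (intro continuous_intros isCont_bessel_reduced) auto
    show "set_integrable lborel {0<..} h"
      unfolding h_def using f_int
      by (intro set_integral_diff set_integrable_mult_right)
  qed (use bessel_moment_primitive_tendsto_zero[OF assms(1-3)] in auto)
  moreover have "(LINT x:{0<..}|lborel. h x)
      = c * (2 * t + 1) * (LINT x:{0<..}|lborel. f (t + \<nu>) x)
        - (c\<^sup>2 + 1) * (LINT x:{0<..}|lborel. f (t + \<nu> + 1) x)
        - (t\<^sup>2 - \<nu>\<^sup>2) * (LINT x:{0<..}|lborel. f (t + \<nu> - 1) x)"
    using f_int unfolding h_def by (simp add: set_integral_diff set_integrable_mult_right)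
  ultimately show ?thesis
    by (simp add: I_def f_def)
qed

lemma powr_mult_BesselJ_eq:
  assumes "\<nu> > -1" and "x > 0"
  shows "x powr s * BesselJ \<nu> x = 2 powr (- \<nu>) * (x powr (s + \<nu>) * bessel_reduced \<nu> x)"
  using assms by (simp add: BesselJ_eq_bessel_reduced powr_add powr_divide powr_minus_divide)

lemma set_integrable_powr_exp_BesselJ:
  fixes \<nu> c q :: real
  assumes "\<nu> \<ge> -1/2" and "c > 0" and "q + \<nu> > -1"
  shows "set_integrable lborel {0<..} (\<lambda>x. x powr q * exp (- c * x) * BesselJ \<nu> x)"
proof -
  have "set_integrable lborel {0<..}
      (\<lambda>x. 2 powr (- \<nu>) * (x powr (q + \<nu>) * exp (- c * x) * bessel_reduced \<nu> x))"
    using assms by (intro set_integrable_mult_right set_integrable_powr_exp_bessel_reduced)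
  then show ?thesis
    by (rule set_integrable_cong[THEN iffD1, rotated -1]) (use assms in \<open>auto simp: powr_mult_BesselJ_eq\<close>)
qed

lemma BesselJ_moment_recurrence:
  fixes \<nu> c t :: real
  assumes "\<nu> \<ge> -1/2" and "c > 0" and "t + \<nu> > 0"
  defines "M \<equiv> \<lambda>s. LINT x:{0<..}|lborel. x powr s * exp (- c * x) * BesselJ \<nu> x"
  shows "(c\<^sup>2 + 1) * M (t + 1) = c * (2 * t + 1) * M t - (t\<^sup>2 - \<nu>\<^sup>2) * M (t - 1)"
proof -
  have \<nu>: "\<nu> > -1" using assms(1) by simp
  define I where "I s = (LINT x:{0<..}|lborel. x powr s * exp (- c * x) * bessel_reduced \<nu> x)" for s
  have M: "M s = 2 powr (- \<nu>) * I (s + \<nu>)" for s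
  proof -
    have "M s = (LINT x:{0<..}|lborel. 2 powr (- \<nu>) * (x powr (s + \<nu>) * exp (- c * x) * bessel_reduced \<nu> x))"
      unfolding M_def by (intro set_lebesgue_integral_cong) (simp_all add: powr_mult_BesselJ_eq[OF \<nu>])
    then show ?thesis
      by (simp add: I_def)
  qed
  have "(c\<^sup>2 + 1) * I (t + \<nu> + 1) = c * (2 * t + 1) * I (t + \<nu>) - (t\<^sup>2 - \<nu>\<^sup>2) * I (t + \<nu> - 1)"
    unfolding I_def using bessel_reduced_moment_recurrence[OF assms(1-3)] by simp
  then have "2 powr (- \<nu>) * ((c\<^sup>2 + 1) * I (t + \<nu> + 1))
      = 2 powr (- \<nu>) * (c * (2 * t + 1) * I (t + \<nu>) - (t\<^sup>2 - \<nu>\<^sup>2) * I (t + \<nu> - 1))"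
    by simp
  moreover have "t + 1 + \<nu> = t + \<nu> + 1" and "t - 1 + \<nu> = t + \<nu> - 1"
    by simp_all
  ultimately show ?thesis
    unfolding M by (simp only:) (simp add: algebra_simps)
qed

lemma set_integral_powr_exp_BesselJ_plus_one:
  fixes \<nu> c q :: real
  assumes "\<nu> \<ge> -1/2" and "c > 0" and "q > -1" and "q + \<nu> > -1"
  shows "(LINT x:{0<..}|lborel. x powr q * exp (- c * x) * (BesselJ \<nu> x + 1))
           = (LINT x:{0<..}|lborel. x powr q * exp (- c * x) * BesselJ \<nu> x) + Gamma (q + 1) / c powr (q + 1)"
proof -
  have "(LINT x:{0<..}|lborel. x powr q * exp (- c * x) * (BesselJ \<nu> x + 1))
      = (LINT x:{0<..}|lborel. x powr q * exp (- c * x) * BesselJ \<nu> x + x powr q * exp (- c * x))"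
    by (simp add: algebra_simps)
  also have "\<dots> = (LINT x:{0<..}|lborel. x powr q * exp (- c * x) * BesselJ \<nu> x)
      + (LINT x:{0<..}|lborel. x powr q * exp (- c * x))"
    using assms by (intro set_integral_add set_integrable_powr_exp_BesselJ set_integrable_powr_exp)
  finally show ?thesis
    using set_integral_powr_exp[OF assms(3,2)] by simp
qed

lemma Gamma_Laplace_moment_recurrence:
  fixes \<nu> c t :: real
  assumes "t > 0" and "c > 0"
  shows "(c\<^sup>2 + 1) * (Gamma (t + 2) / c powr (t + 2))
           = c * (2 * t + 1) * (Gamma (t + 1) / c powr (t + 1)) - (t\<^sup>2 - \<nu>\<^sup>2) * (Gamma t / c powr t)
             + Gamma t * (t\<^sup>2 + t - c\<^sup>2 * \<nu>\<^sup>2) / c powr (t + 2)"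
proof -
  have "t \<notin> \<int>\<^sub>\<le>\<^sub>0" and "t + 1 \<notin> \<int>\<^sub>\<le>\<^sub>0"
    using assms(1) by (auto dest: nonpos_Ints_nonpos)
  then have "Gamma (t + 1) = t * Gamma t" and "Gamma (t + 2) = (t + 1) * t * Gamma t"
    using Gamma_plus1[of t] Gamma_plus1[of "t + 1"] by (simp_all add: add.assoc)
  moreover have "c powr (t + 1) = c powr t * c" and "c powr (t + 2) = c powr t * c\<^sup>2"
    using assms(2) by (simp_all add: powr_add power2_eq_square)
  ultimately show ?thesis
    using assms(2) by (simp add: field_simps power2_eq_square)
qed

theorem proposition3:
  fixes \<nu> \<alpha> c :: real
  assumes "\<nu> \<ge> 0" and "\<alpha> > -1" and "c > 0"
  defines "\<mu> \<equiv> \<lambda>k::nat. LINT x:{0<..}|lborel. x powr (real k + \<alpha>) * exp (- c * x) * (BesselJ \<nu> x + 1)"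
      and "\<mu>\<^sub>0 \<equiv> \<lambda>k::nat. LINT x:{0<..}|lborel. x powr (real k + \<alpha>) * exp (- c * x) * BesselJ \<nu> x"
  shows "(\<forall>k::nat. k \<ge> 1 \<longrightarrow>
            \<mu> (k + 1) = 1 / (c\<^sup>2 + 1) *
              (c * (2 * (real k + \<alpha>) + 1) * \<mu> k
               - ((real k + \<alpha>)\<^sup>2 - \<nu>\<^sup>2) * \<mu> (k - 1)
               + Gamma (real k + \<alpha>) * ((real k + \<alpha>)\<^sup>2 + (real k + \<alpha>) - c\<^sup>2 * \<nu>\<^sup>2)
                 / c powr (real k + \<alpha> + 2)))
         \<and> \<mu> 0 = \<mu>\<^sub>0 0 + Gamma (\<alpha> + 1) / c powr (\<alpha> + 1)
         \<and> \<mu> 1 = \<mu>\<^sub>0 1 + Gamma (\<alpha> + 2) / c powr (\<alpha> + 2)"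
proof -
  define M where "M s = (LINT x:{0<..}|lborel. x powr s * exp (- c * x) * BesselJ \<nu> x)" for s
  have \<mu>: "\<mu> k = M (real k + \<alpha>) + Gamma (real k + \<alpha> + 1) / c powr (real k + \<alpha> + 1)" for k
    unfolding \<mu>_def M_def using assms(1-3)
    by (intro set_integral_powr_exp_BesselJ_plus_one) auto
  have "\<mu> (k + 1) = 1 / (c\<^sup>2 + 1) * (c * (2 * t + 1) * \<mu> k - (t\<^sup>2 - \<nu>\<^sup>2) * \<mu> (k - 1)
      + Gamma t * (t\<^sup>2 + t - c\<^sup>2 * \<nu>\<^sup>2) / c powr (t + 2))" if "k \<ge> 1" "t = real k + \<alpha>" for k t
  proof -
    have t: "t > 0"
      using that assms(2) by simp
    have shift: "real k + \<alpha> = t" "real (k + 1) + \<alpha> = t + 1" "t + 1 + 1 = t + 2"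
      "real (k - 1) + \<alpha> = t - 1" "t - 1 + 1 = t"
      using that by auto
    have "\<mu> (k + 1) = M (t + 1) + Gamma (t + 2) / c powr (t + 2)"
      "\<mu> k = M t + Gamma (t + 1) / c powr (t + 1)" "\<mu> (k - 1) = M (t - 1) + Gamma t / c powr t"
      using \<mu>[of "k + 1", unfolded shift] \<mu>[of k, unfolded shift] \<mu>[of "k - 1", unfolded shift]
      by simp_all
    moreover have "(c\<^sup>2 + 1) * M (t + 1) = c * (2 * t + 1) * M t - (t\<^sup>2 - \<nu>\<^sup>2) * M (t - 1)"
      unfolding M_def using assms t by (intro BesselJ_moment_recurrence) auto
    moreover note Gamma_Laplace_moment_recurrence[OF t assms(3), of \<nu>]
    moreover have "c\<^sup>2 + 1 > 0"
      by (simp add: add_nonneg_pos)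
    ultimately show ?thesis
      by (simp add: field_simps)
  qed
  then show ?thesis
    using \<mu>[of 0] \<mu>[of 1] by (simp add: \<mu>\<^sub>0_def M_def add_ac)
qed

end
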